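(* Let $(r_i)_{i\in\mathbb{N}_0}\subseteq\mathbb{N}$ be a sequence of natural numbers. Then there exist a sequence $(c_i)_{i\in\mathbb{N}_0}\subseteq(0,\infty)$ and a sequence $(k_i)_{i\in\mathbb{N}_0}\subseteq\mathbb{N}$ such that $T=\sum_{i\in\mathbb{N}_0}p_i\cdot\partial_x^i$ with $p_{2i}(x)=c_i+x^{2k_ir_i}$ and $p_{2i+1}(x)=0$ for all $i\in\mathbb{N}_0$ is a positivity preserver on $\mathbb{R}[x]$.
   Context: A linear map $T:\mathbb{R}[x]\to\mathbb{R}[x]$ is a positivity preserver if it maps every polynomial that is non-negative on $\mathbb{R}$ to a polynomial that is non-negative on $\mathbb{R}$. The operator $\sum_i p_i\partial_x^i$ acts on each polynomial as a finite sum. *)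

theory Defs
  imports "HOL-Computational_Algebra.Polynomial"
begin

definition nonneg_poly :: "real poly \<Rightarrow> bool" where
  "nonneg_poly f \<longleftrightarrow> (\<forall>x. 0 \<le> poly f x)"

definition positivity_preserver :: "(real poly \<Rightarrow> real poly) \<Rightarrow> bool" where
  "positivity_preserver T \<longleftrightarrow> (\<forall>f. nonneg_poly f \<longrightarrow> nonneg_poly (T f))"

text \<open>The differential operator sum_i p_i * d^i acting on f; the sum is finite
  since the i-th derivative of f vanishes for i > degree f.\<close>
definition diff_op :: "(nat \<Rightarrow> real poly) \<Rightarrow> real poly \<Rightarrow> real poly" where
  "diff_op p f = (\<Sum>i\<le>degree f. p i * (pderiv ^^ i) f)"

end

theory Submission
  imports Defs
begin

(* By Taylor's formula (T f)(y) = sum_i i! p_i(y) [x^i] f(x + y): a linear functional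
   with moments h_i = i! p_i(y), applied to the shifted polynomial f(x + y), which is again
   non-negative. Non-negative real polynomials are sums of squares, so it suffices that the
   Hankel matrix (h_(n+m)) is positive semidefinite.
   Take c_i = 16^(i^3) and k_i such that L_i = k_i r_i grows at least fourfold. Then the weights
   a_i = c_i + y^(2 L_i) satisfy 4^(2k+1) a_k^2 <= a_(k-j) a_(k+j): for the constants by strict
   convexity of i^3, for the powers of y by lacunarity of L. Together with the log-convexity of
   the factorial this makes the Hankel matrix diagonally dominant with the summable weights
   2^-(n+m+1), hence positive semidefinite. *)

inductive sos :: "real poly \<Rightarrow> bool" where
  square: "sos (q * q)"
| add: "sos p \<Longrightarrow> sos q \<Longrightarrow> sos (p + q)"

lemma sos_square_mult: "sos p \<Longrightarrow> sos (q * q * p)"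
proof (induction rule: sos.induct)
  case (square a)
  have "q * q * (a * a) = (q * a) * (q * a)" by (simp add: algebra_simps)
  then show ?case by (metis sos.square)
next
  case (add p1 p2)
  then show ?case by (simp add: distrib_left sos.add)
qed

lemma nonneg_polyI_punctured:
  assumes "\<And>x. x \<noteq> t \<Longrightarrow> 0 \<le> poly p x"
  shows "nonneg_poly p"
  unfolding nonneg_poly_def
proof
  fix x
  have "(poly p \<longlongrightarrow> poly p t) (at t)"
    using isCont_def poly_isCont by blast
  moreover have "\<forall>\<^sub>F x in at t. 0 \<le> poly p x"
    using assms by (auto simp: eventually_at_filter)
  ultimately have "0 \<le> poly p t"
    by (rule tendsto_lowerbound) simp
  with assms show "0 \<le> poly p x" by (cases "x = t") auto
qed

lemma nonneg_poly_attains_min: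
  assumes "nonneg_poly p"
  obtains t where "\<And>x. poly p t \<le> poly p x"
proof (cases "degree p = 0")
  case True
  then obtain c where "p = [:c:]" by (rule degree_eq_zeroE)
  then show ?thesis using that by simp
next
  case False
  have "0 \<le> poly p 0" using assms by (simp add: nonneg_poly_def)
  then have "\<forall>\<^sub>F x in at_infinity. poly p 0 + 1 \<le> norm (poly p x)"
    using filterlim_poly_at_infinity[of p] False by (simp add: filterlim_at_infinity)
  then obtain R where R: "\<And>x. R \<le> \<bar>x\<bar> \<Longrightarrow> poly p 0 + 1 \<le> \<bar>poly p x\<bar>"
    by (auto simp: eventually_at_infinity)
  obtain M t where "\<forall>x. - \<bar>R\<bar> \<le> x \<and> x \<le> \<bar>R\<bar> \<longrightarrow> M \<le> poly p x" "poly p t = M"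
    using isCont_eq_Lb[of "- \<bar>R\<bar>" "\<bar>R\<bar>" "poly p"] by auto
  then have t: "\<And>x. \<bar>x\<bar> \<le> \<bar>R\<bar> \<Longrightarrow> poly p t \<le> poly p x"
    by (simp add: abs_le_iff)
  have "poly p t \<le> poly p x" for x
  proof (cases "\<bar>x\<bar> \<le> \<bar>R\<bar>")
    case False
    then have "poly p 0 + 1 \<le> poly p x"
      using R[of x] assms by (simp add: nonneg_poly_def)
    moreover have "poly p t \<le> poly p 0" using t[of 0] by simp
    ultimately show ?thesis by simp
  qed (use t in auto)
  then show ?thesis by (rule that)
qed

lemma linear_power2_dvd_if_root_of_pderiv:
  fixes p :: "'a::idom poly"
  assumes "poly p t = 0" and "poly (pderiv p) t = 0"
  shows "[:-t, 1:]^2 dvd p"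
proof -
  obtain q where q: "p = [:-t, 1:] * q"
    using assms(1) poly_eq_0_iff_dvd by blast
  have "poly q t = 0"
    using assms(2) unfolding q pderiv_mult by (simp add: pderiv_pCons)
  then obtain q' where "q = [:-t, 1:] * q'"
    using poly_eq_0_iff_dvd by blast
  then have "p = [:-t, 1:]^2 * q'"
    using q by (simp only: power2_eq_square mult.assoc)
  then show ?thesis by simp
qed

lemma nonneg_poly_imp_sos:
  assumes "nonneg_poly p"
  shows "sos p"
  using assms
proof (induction "degree p" arbitrary: p rule: less_induct)
  case less
  obtain t where t: "\<And>x. poly p t \<le> poly p x"
    using nonneg_poly_attains_min[OF less.prems] by blast
  define m where "m = poly p t"
  \<comment> \<open>Subtracting the minimum leaves a polynomial with a double root at the minimiser.\<close>
  have "0 \<le> m" using less.prems by (simp add: nonneg_poly_def m_def)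
  have "poly (pderiv p) t = 0"
    using DERIV_local_min[OF poly_DERIV zero_less_one] t by blast
  then have "[:-t, 1:]^2 dvd p - [:m:]"
    by (intro linear_power2_dvd_if_root_of_pderiv) (simp_all add: m_def pderiv_diff)
  then obtain q where q: "p = [:m:] + [:-t, 1:]^2 * q"
    by (metis add_diff_cancel_left' diff_add_cancel dvdE)
  have sos_m: "sos [:m:]"
    using sos.square[of "[:sqrt m:]"] \<open>0 \<le> m\<close> by (simp add: mult_to_poly)
  show ?case
  proof (cases "q = 0")
    case True
    then show ?thesis using q sos_m by simp
  next
    case False
    have "degree p = degree ([:-t, 1:]^2 * q)"
      using False by (simp add: q degree_add_eq_right degree_mult_eq degree_linear_power)
    then have "degree q < degree p"
      using False by (simp add: degree_mult_eq degree_linear_power)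
    moreover have "nonneg_poly q"
    proof (rule nonneg_polyI_punctured)
      fix x :: real assume "x \<noteq> t"
      have "m \<le> poly p x" using t by (simp add: m_def)
      then have "0 \<le> (x - t)^2 * poly q x" by (simp add: q)
      with \<open>x \<noteq> t\<close> show "0 \<le> poly q x" by (simp add: zero_le_mult_iff)
    qed
    ultimately have "sos q" by (rule less.hyps)
    then show ?thesis
      unfolding q power2_eq_square by (intro sos.add sos_m sos_square_mult)
  qed
qed

definition riesz_functional :: "(nat \<Rightarrow> real) \<Rightarrow> real poly \<Rightarrow> real" where
  "riesz_functional h p = (\<Sum>i\<le>degree p. h i * coeff p i)"

lemma riesz_functional_eq_sum:
  assumes "degree p \<le> N"
  shows "riesz_functional h p = (\<Sum>i\<le>N. h i * coeff p i)"
  unfolding riesz_functional_def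
  using assms by (intro sum.mono_neutral_left) (auto simp: coeff_eq_0)

lemma riesz_functional_add:
  "riesz_functional h (p + q) = riesz_functional h p + riesz_functional h q"
proof -
  define N where "N = max (degree p) (degree q)"
  have "degree p \<le> N" "degree q \<le> N" "degree (p + q) \<le> N"
    unfolding N_def by (auto intro: degree_add_le)
  then show ?thesis
    by (simp add: riesz_functional_eq_sum algebra_simps sum.distrib)
qed

lemma riesz_functional_sum:
  "riesz_functional h (\<Sum>x\<in>A. f x) = (\<Sum>x\<in>A. riesz_functional h (f x))"
  by (induction A rule: infinite_finite_induct)
    (simp_all add: riesz_functional_add riesz_functional_def[of _ 0])

lemma riesz_functional_monom: "riesz_functional h (monom c k) = h k * c"
  using riesz_functional_eq_sum[of "monom c k" k h]
  by (simp add: degree_monom_le if_distrib sum.delta cong: if_cong)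

lemma riesz_functional_square:
  "riesz_functional h (q * q) =
     (\<Sum>n\<le>degree q. \<Sum>m\<le>degree q. h (n + m) * coeff q n * coeff q m)"
proof -
  have "q * q = (\<Sum>n\<le>degree q. monom (coeff q n) n) * (\<Sum>m\<le>degree q. monom (coeff q m) m)"
    by (simp add: poly_as_sum_of_monoms)
  also have "\<dots> = (\<Sum>n\<le>degree q. \<Sum>m\<le>degree q. monom (coeff q n * coeff q m) (n + m))"
    by (simp add: sum_product mult_monom)
  finally show ?thesis
    by (simp add: riesz_functional_sum riesz_functional_monom mult.assoc)
qed

lemma riesz_functional_sos_nonneg:
  assumes "sos p" and "\<And>q. 0 \<le> riesz_functional h (q * q)"
  shows "0 \<le> riesz_functional h p"
  using assms(1) by induction (simp_all add: assms(2) riesz_functional_add)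

lemma poly_higher_pderiv_eq_coeff_pcompose:
  "poly ((pderiv ^^ i) f) y = fact i * coeff (pcompose f [:y, 1:]) i"
proof -
  have shift: "(pderiv ^^ i) (pcompose f [:y, 1:]) = pcompose ((pderiv ^^ i) f) [:y, 1:]"
    by (induction i) (simp_all add: pderiv_pcompose pderiv_pCons)
  have "poly ((pderiv ^^ i) f) y = coeff (pcompose ((pderiv ^^ i) f) [:y, 1:]) 0"
    by (simp add: poly_pcompose poly_0_coeff_0[symmetric])
  also have "\<dots> = fact i * coeff (pcompose f [:y, 1:]) i"
    by (simp add: shift[symmetric] coeff_higher_pderiv pochhammer_fact)
  finally show ?thesis .
qed

lemma poly_diff_op:
  "poly (diff_op p f) y =
     riesz_functional (\<lambda>i. fact i * poly (p i) y) (pcompose f [:y, 1:])"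
  by (simp add: diff_op_def riesz_functional_def poly_sum degree_pcompose
      poly_higher_pderiv_eq_coeff_pcompose ac_simps)

lemma positivity_preserver_diff_opI:
  assumes "\<And>y q. 0 \<le> riesz_functional (\<lambda>i. fact i * poly (p i) y) (q * q)"
  shows "positivity_preserver (diff_op p)"
  unfolding positivity_preserver_def
proof (intro allI impI)
  fix f assume "nonneg_poly f"
  then have "sos (pcompose f [:y, 1:])" for y
    by (intro nonneg_poly_imp_sos) (simp add: nonneg_poly_def poly_pcompose)
  then show "nonneg_poly (diff_op p f)"
    unfolding nonneg_poly_def poly_diff_op
    by (blast intro: riesz_functional_sos_nonneg assms)
qed

lemma neg_weighted_am_gm_le:
  fixes H D1 D2 x y \<rho> :: real
  assumes "H^2 \<le> \<rho>^2 * D1 * D2" "0 \<le> D1" "0 \<le> D2" "0 \<le> \<rho>"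
  shows "- (\<rho> / 2) * (D1 * x^2 + D2 * y^2) \<le> H * x * y"
proof -
  define \<alpha> where "\<alpha> = \<rho> * D1 * x^2"
  define \<beta> where "\<beta> = \<rho> * D2 * y^2"
  have "\<bar>H * x * y\<bar>^2 = H^2 * (x^2 * y^2)" by (simp add: power_mult_distrib)
  also have "\<dots> \<le> \<rho>^2 * D1 * D2 * (x^2 * y^2)" by (rule mult_right_mono) (use assms in auto)
  also have "\<dots> = \<alpha> * \<beta>" by (simp add: \<alpha>_def \<beta>_def power2_eq_square)
  finally have "\<bar>H * x * y\<bar> \<le> sqrt (\<alpha> * \<beta>)" by (rule real_le_rsqrt)
  also have "\<dots> \<le> (\<alpha> + \<beta>) / 2"
    using assms by (intro arith_geo_mean_sqrt) (simp_all add: \<alpha>_def \<beta>_def)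
  finally show ?thesis by (simp add: \<alpha>_def \<beta>_def algebra_simps)
qed

lemma quadratic_form_nonneg_if_weighted_dominant:
  fixes H \<rho> :: "nat \<Rightarrow> nat \<Rightarrow> real" and b :: "nat \<Rightarrow> real"
  assumes \<rho>_sym: "\<And>n m. \<rho> n m = \<rho> m n"
    and \<rho>_nonneg: "\<And>n m. 0 \<le> \<rho> n m"
    and row_sum: "\<And>n. (\<Sum>m\<le>N. \<rho> n m) \<le> 1"
    and diag: "\<And>n. 0 \<le> H n n"
    and off_diag: "\<And>n m. n \<noteq> m \<Longrightarrow> (H n m)^2 \<le> (\<rho> n m)^2 * H n n * H m m"
  shows "0 \<le> (\<Sum>n\<le>N. \<Sum>m\<le>N. H n m * b n * b m)"
proof -
  define D where "D n = H n n * (b n)^2" for n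
  define E where "E n m = (if n = m then 0 else \<rho> n m)" for n m
  have "H n m * b n * b m \<ge> (if n = m then D n else 0) - E n m / 2 * (D n + D m)" for n m
  proof (cases "n = m")
    case False
    then show ?thesis
      using neg_weighted_am_gm_le[OF off_diag[OF False] diag diag \<rho>_nonneg]
      by (simp add: D_def E_def)
  qed (simp add: D_def E_def power2_eq_square)
  then have lower: "(\<Sum>n\<le>N. \<Sum>m\<le>N. (if n = m then D n else 0) - E n m / 2 * (D n + D m))
      \<le> (\<Sum>n\<le>N. \<Sum>m\<le>N. H n m * b n * b m)"
    by (intro sum_mono)
  have swap: "(\<Sum>n\<le>N. \<Sum>m\<le>N. E n m * D m) = (\<Sum>n\<le>N. \<Sum>m\<le>N. E n m * D n)"
  proof (subst sum.swap, intro sum.cong refl)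
    fix n m
    show "E m n * D n = E n m * D n" by (simp add: E_def \<rho>_sym)
  qed
  have "0 \<le> (\<Sum>n\<le>N. D n * (1 - (\<Sum>m\<le>N. E n m)))"
  proof (intro sum_nonneg mult_nonneg_nonneg)
    fix n
    have "(\<Sum>m\<le>N. E n m) \<le> (\<Sum>m\<le>N. \<rho> n m)"
      by (intro sum_mono) (simp add: E_def \<rho>_nonneg)
    then show "0 \<le> 1 - (\<Sum>m\<le>N. E n m)" using row_sum[of n] by linarith
  qed (simp add: D_def diag)
  also have "\<dots> = (\<Sum>n\<le>N. D n) - (\<Sum>n\<le>N. \<Sum>m\<le>N. E n m * D n) / 2
                   - (\<Sum>n\<le>N. \<Sum>m\<le>N. E n m * D m) / 2"
    unfolding swap by (simp add: sum_subtractf sum_distrib_left sum_distrib_right algebra_simps)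
  also have "\<dots> = (\<Sum>n\<le>N. \<Sum>m\<le>N. (if n = m then D n else 0) - E n m / 2 * (D n + D m))"
    by (simp add: sum_subtractf sum.distrib sum_divide_distrib add_divide_distrib
        distrib_left mult.commute)
  also note lower
  finally show ?thesis .
qed

lemma fact_square_le: "(fact (n + d) :: real)^2 \<le> fact n * fact (n + 2 * d)"
proof (induction d)
  case (Suc d)
  have "(of_nat (n + d + 1) :: real)^2 \<le> of_nat (n + 2 * d + 2) * of_nat (n + 2 * d + 1)"
    unfolding of_nat_mult[symmetric] of_nat_power[symmetric] of_nat_le_iff
    by (simp add: power2_eq_square algebra_simps)
  then have "(fact (n + Suc d) :: real)^2
      \<le> (of_nat (n + 2 * d + 2) * of_nat (n + 2 * d + 1)) * (fact n * fact (n + 2 * d))"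
    unfolding add_Suc_right fact_Suc power_mult_distrib
    by (intro mult_mono Suc.IH) (simp_all add: algebra_simps)
  also have "\<dots> = fact n * fact (n + 2 * Suc d)"
    by (simp add: fact_Suc algebra_simps)
  finally show ?case .
qed (simp add: power2_eq_square)

lemma cube_convexity_gap:
  fixes s j :: nat
  assumes "1 \<le> j"
  shows "2 * (s + j + 1) + 2 * (s + j)^3 \<le> s^3 + (s + 2 * j)^3"
proof -
  have cubes: "s^3 + (s + 2 * j)^3 = 2 * (s + j)^3 + 6 * ((s + j) * j^2)"
    by (simp add: power2_eq_square power3_eq_cube algebra_simps)
  have "(s + j) * 1 \<le> (s + j) * j^2"
    using assms by (intro mult_le_mono2) simp
  then have "s + j \<le> (s + j) * j^2" by simp
  then show ?thesis unfolding cubes using assms by presburger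
qed

lemma lacunary_weight_inequality:
  fixes u :: real and L :: "nat \<Rightarrow> nat"
  assumes "0 \<le> u" and "1 \<le> j" and "4 * L (s + j) \<le> L (s + 2 * j)"
  defines "a \<equiv> \<lambda>i. 16 ^ (i^3) + u ^ L i"
  shows "4 ^ (2 * (s + j) + 1) * (a (s + j))^2 \<le> a s * a (s + 2 * j)"
proof -
  define k t where "k = s + j" and "t = s + 2 * j"
  define c where "c i = (16::real) ^ (i^3)" for i
  define U where "U i = u ^ L i" for i
  define \<theta> :: real where "\<theta> = 16 ^ (k + 1)"
  have a_eq: "a i = c i + U i" for i by (simp add: a_def c_def U_def)
  have c_ge: "1 \<le> c i" for i by (simp add: c_def)
  have U_ge: "0 \<le> U i" for i by (simp add: U_def assms(1))
  have \<theta>_ge: "16 \<le> \<theta>" unfolding \<theta>_def by (simp add: power_increasing[of 1, simplified])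
  have gap: "\<theta>^2 * (c k)^2 \<le> c s * c t"
  proof -
    have "\<theta>^2 * (c k)^2 = 16 ^ (2 * (k + 1) + 2 * k^3)"
      by (simp add: \<theta>_def c_def power_add power_mult[symmetric] mult.commute)
    also have "\<dots> \<le> (16::real) ^ (s^3 + t^3)"
      using cube_convexity_gap[OF assms(2), of s] by (intro power_increasing) (simp_all add: k_def t_def)
    also have "\<dots> = c s * c t" by (simp add: c_def power_add)
    finally show ?thesis .
  qed
  have ct_le: "c s * c t \<le> a s * a t"
    using c_ge[of s] c_ge[of t] U_ge[of s] U_ge[of t] by (intro mult_mono) (simp_all add: a_eq)
  have c_part: "\<theta> * (c k)^2 \<le> a s * a t"
  proof -
    have "\<theta> * (c k)^2 \<le> \<theta>^2 * (c k)^2"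
      using \<theta>_ge by (intro mult_right_mono) (simp_all add: power2_eq_square)
    with gap ct_le show ?thesis by linarith
  qed
  have U_part: "\<theta> * (U k)^2 \<le> a s * a t"
  proof (cases "(U k)^2 \<le> \<theta>")
    case True
    have "\<theta> * (U k)^2 \<le> \<theta>^2" using True \<theta>_ge by (simp add: power2_eq_square)
    also have "\<dots> \<le> \<theta>^2 * (c k)^2"
      using c_ge[of k] \<theta>_ge by (simp add: mult_le_cancel_left1 one_le_power)
    finally show ?thesis using gap ct_le by linarith
  next
    case False
    have "1 < u"
    proof (rule ccontr)
      assume "\<not> 1 < u"
      then have "(U k)^2 \<le> 1"
        using assms(1) by (simp add: U_def power_le_one power_mult[symmetric])
      with False \<theta>_ge show False by simp
    qed
    have "\<theta> * (U k)^2 \<le> (U k)^2 * (U k)^2" using False by (intro mult_right_mono) simp_all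
    also have "\<dots> = u ^ (4 * L k)" by (simp add: U_def power_mult[symmetric] power_add[symmetric])
    also have "\<dots> \<le> u ^ L t"
      using assms(3) \<open>1 < u\<close> by (intro power_increasing) (simp_all add: k_def t_def)
    also have "\<dots> \<le> a t" using c_ge[of t] by (simp add: a_eq U_def)
    also have "\<dots> \<le> a s * a t"
      using mult_right_mono[of 1 "a s" "a t"] c_ge[of s] c_ge[of t] U_ge[of s] U_ge[of t]
      by (simp add: a_eq)
    finally show ?thesis .
  qed
  have \<theta>_eq: "\<theta> = 4 * 4 ^ (2 * k + 1)"
    by (simp add: \<theta>_def power_mult)
  have "4 ^ (2 * k + 1) * (a k)^2 \<le> 4 ^ (2 * k + 1) * (2 * (c k)^2 + 2 * (U k)^2)"
    using sum_squares_ge_zero[of "c k - U k" 0]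
    by (intro mult_left_mono) (simp_all add: a_eq power2_eq_square algebra_simps)
  also have "\<dots> = (\<theta> * (c k)^2 + \<theta> * (U k)^2) / 2"
    by (simp add: \<theta>_eq algebra_simps)
  also have "\<dots> \<le> a s * a t" using c_part U_part by (simp add: field_simps)
  finally show ?thesis by (simp add: k_def t_def)
qed

lemma riesz_functional_square_nonneg_even:
  fixes a :: "nat \<Rightarrow> real"
  assumes a_nonneg: "\<And>i. 0 \<le> a i"
    and a_gap: "\<And>s j. 1 \<le> j \<Longrightarrow> 4 ^ (2 * (s + j) + 1) * (a (s + j))^2 \<le> a s * a (s + 2 * j)"
  shows "0 \<le> riesz_functional (\<lambda>i. if even i then fact i * a (i div 2) else 0) (q * q)"
proof -
  define H where "H n m = (if even (n + m) then fact (n + m) * a ((n + m) div 2) else 0)" for n m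
  define \<rho> where "\<rho> n m = (1 / 2 :: real) ^ (n + m + 1)" for n m
  have H_sym: "H n m = H m n" for n m by (simp add: H_def add.commute)
  have \<rho>_sym: "\<rho> n m = \<rho> m n" for n m by (simp add: \<rho>_def add.commute)
  have \<rho>_nonneg: "0 \<le> \<rho> n m" for n m by (simp add: \<rho>_def)
  have diag: "0 \<le> H n n" for n by (simp add: H_def a_nonneg)
  have off_diag_less: "(H n m)^2 \<le> (\<rho> n m)^2 * H n n * H m m" if "n < m" for n m
  proof (cases "even (n + m)")
    case True
    with \<open>n < m\<close> have "even (m - n)" by simp
    then obtain j where "m - n = 2 * j" by (rule evenE)
    with \<open>n < m\<close> have m: "m = n + 2 * j" and "1 \<le> j" by simp_all
    have H_nm: "H n m = fact (2 * n + 2 * j) * a (n + j)"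
      by (simp add: H_def m algebra_simps)
    have H_nn: "H n n = fact (2 * n) * a n"
      by (simp add: H_def mult_2[symmetric])
    have H_mm: "H m m = fact (2 * n + 2 * (2 * j)) * a (n + 2 * j)"
      by (simp add: H_def m algebra_simps)
    have "\<rho> n m = (1 / 2) ^ (2 * (n + j) + 1)"
      by (simp add: \<rho>_def m algebra_simps)
    then have "(\<rho> n m)^2 * 4 ^ (2 * (n + j) + 1) = ((1 / 2)^2 * 4) ^ (2 * (n + j) + 1)"
      by (simp only: power_mult_distrib power_mult[symmetric] ac_simps)
    also have "\<dots> = 1" by (simp add: power2_eq_square)
    finally have \<rho>_sq: "(\<rho> n m)^2 * 4 ^ (2 * (n + j) + 1) = 1" .
    have "(a (n + j))^2 = (\<rho> n m)^2 * (4 ^ (2 * (n + j) + 1) * (a (n + j))^2)"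
      by (simp only: \<rho>_sq mult.assoc[symmetric] mult_1)
    also have "\<dots> \<le> (\<rho> n m)^2 * (a n * a (n + 2 * j))"
      by (intro mult_left_mono a_gap \<open>1 \<le> j\<close>) simp
    finally have "(fact (2 * n + 2 * j))^2 * (a (n + j))^2
        \<le> (fact (2 * n) * fact (2 * n + 2 * (2 * j))) * ((\<rho> n m)^2 * (a n * a (n + 2 * j)))"
      by (intro mult_mono fact_square_le) simp_all
    then show ?thesis by (simp add: H_nm H_nn H_mm power_mult_distrib ac_simps)
  qed (simp add: H_def diag a_nonneg)
  have off_diag: "(H n m)^2 \<le> (\<rho> n m)^2 * H n n * H m m" if "n \<noteq> m" for n m
  proof (cases "n < m")
    case False
    with that have "(H m n)^2 \<le> (\<rho> m n)^2 * H m m * H n n"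
      by (intro off_diag_less) simp
    then show ?thesis by (simp only: H_sym[of m n] \<rho>_sym[of m n] mult_ac)
  qed (rule off_diag_less)
  have row_sum: "(\<Sum>m\<le>N. \<rho> n m) \<le> 1" for n N
  proof -
    have "(\<Sum>m\<le>N. \<rho> n m) \<le> (\<Sum>m\<le>N. (1 / 2 :: real) ^ (m + 1))"
      unfolding \<rho>_def by (intro sum_mono power_decreasing) auto
    also have "\<dots> = 1 - (1 / 2) ^ (N + 1)"
      by (induction N) (simp_all add: field_simps)
    also have "\<dots> \<le> 1" by simp
    finally show ?thesis .
  qed
  have "0 \<le> (\<Sum>n\<le>degree q. \<Sum>m\<le>degree q. H n m * coeff q n * coeff q m)"
    by (rule quadratic_form_nonneg_if_weighted_dominant[OF \<rho>_sym \<rho>_nonneg row_sum diag off_diag])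
  then show ?thesis unfolding riesz_functional_square H_def .
qed

lemma lacunary_diff_op_positivity_preserver:
  fixes L :: "nat \<Rightarrow> nat"
  assumes lacunary: "\<And>a b. a < b \<Longrightarrow> 4 * L a \<le> L b"
  shows "positivity_preserver (diff_op (\<lambda>j. if even j
           then [:16 ^ ((j div 2)^3):] + monom 1 (2 * L (j div 2)) else 0))"
proof (rule positivity_preserver_diff_opI, goal_cases)
  case (1 y q)
  define a where "a i = 16 ^ (i^3) + (y^2) ^ L i" for i :: nat
  have coeffs: "(\<lambda>i. fact i * poly (if even i
        then [:16 ^ ((i div 2)^3):] + monom 1 (2 * L (i div 2)) else 0) y)
      = (\<lambda>i. if even i then fact i * a (i div 2) else 0)"
    by (simp add: a_def poly_monom power_mult fun_eq_iff)
  show ?case unfolding coeffs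
  proof (rule riesz_functional_square_nonneg_even)
    show "0 \<le> a i" for i by (simp add: a_def)
    show "4 ^ (2 * (s + j) + 1) * (a (s + j))^2 \<le> a s * a (s + 2 * j)" if "1 \<le> j" for s j
      unfolding a_def using that lacunary by (intro lacunary_weight_inequality) simp_all
  qed
qed

primrec lacunary_factor :: "(nat \<Rightarrow> nat) \<Rightarrow> nat \<Rightarrow> nat" where
  "lacunary_factor r 0 = 1"
| "lacunary_factor r (Suc i) = 4 * lacunary_factor r i * r i"

lemma lacunary_factor_ge_1:
  assumes "\<And>i. 1 \<le> r i"
  shows "1 \<le> lacunary_factor r i"
  by (induction i) (simp_all add: assms[unfolded One_nat_def] one_le_mult_iff)

lemma lacunary_factor_lacunary:
  assumes r_ge: "\<And>i. 1 \<le> r i" and "a < b"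
  shows "4 * (lacunary_factor r a * r a) \<le> lacunary_factor r b * r b"
proof -
  define L where "L i = lacunary_factor r i * r i" for i
  have step: "4 * L i \<le> L (Suc i)" for i
  proof -
    have "4 * L i * 1 \<le> 4 * L i * r (Suc i)" using r_ge by (rule mult_le_mono2)
    then show ?thesis by (simp add: L_def ac_simps)
  qed
  have "L i \<le> L (Suc i)" for i
    using step[of i] by simp
  moreover have "Suc a \<le> b" using \<open>a < b\<close> by simp
  ultimately have "L (Suc a) \<le> L b" by (rule lift_Suc_mono_le)
  with step[of a] have "4 * L a \<le> L b" by (rule order_trans)
  then show ?thesis unfolding L_def .
qed

theorem proposition4p2:
  fixes r :: "nat \<Rightarrow> nat"
  assumes "\<forall>i. 1 \<le> r i"
  shows "\<exists>(c :: nat \<Rightarrow> real) (k :: nat \<Rightarrow> nat).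
           (\<forall>i. 0 < c i) \<and> (\<forall>i. 1 \<le> k i) \<and>
           positivity_preserver (diff_op (\<lambda>j. if even j
               then [:c (j div 2):] + monom 1 (2 * k (j div 2) * r (j div 2))
               else 0))"
proof (intro exI conjI allI)
  let ?k = "lacunary_factor r"
  show "0 < (16 :: real) ^ (i^3)" for i by simp
  show "1 \<le> ?k i" for i using assms by (intro lacunary_factor_ge_1) simp
  have "positivity_preserver (diff_op (\<lambda>j. if even j
      then [:16 ^ ((j div 2)^3):] + monom 1 (2 * (?k (j div 2) * r (j div 2))) else 0))"
    using assms by (intro lacunary_diff_op_positivity_preserver lacunary_factor_lacunary) simp_all
  then show "positivity_preserver (diff_op (\<lambda>j. if even j
      then [:16 ^ ((j div 2)^3):] + monom 1 (2 * ?k (j div 2) * r (j div 2)) else 0))"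
    by (simp only: mult.assoc)
qed

end
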